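(* Let $X$ be a compact metric space of negative type. Then $$|X|_+ = \sup\{|Y| : Y\subseteq X \text{ closed and positively weighted}\},$$ and this supremum is attained when $Y$ is the support of the diversity-maximizing measure of $X$.
   Context: For a compact metric space $(Y,d)$: $Z(x,y)=e^{-d(x,y)}$; $\mathscr{M}(Y)$ = finite signed Borel measures, $\mathscr{P}(Y)$ = Borel probability measures; $\langle\mu,\nu\rangle_{\mathscr{W}}=\int\int Z(x,y)\,\mu(dx)\nu(dy)$. $Y$ is of negative type if $(Y,\sqrt d)$ embeds isometrically into a Hilbert space (closed subsets of a negative-type space are of negative type); then $\langle\cdot,\cdot\rangle_{\mathscr W}$ is an inner product on $\mathscr{M}(Y)$ with norm $\|\cdot\|_{\mathscr W}$. Maximum diversity: $|Y|_+=\sup_{\mu\in\mathscr{P}(Y)}1/\langle\mu,\mu\rangle_{\mathscr W}$, attained by a unique diversity-maximizing measure when $Y$ is of negative type. Magnitude: $|Y|=\sup\{1/\|\mu\|_{\mathscr W}^2:\mu\in\mathscr M(Y),\ \mu(Y)=1\}$. $Y$ is positively weighted if this supremum is attained at some probability measure $\mu\in\mathscr{P}(Y)$ (equivalently, there is a nonnegative measure $w$ on $Y$ with $\int_Y e^{-d(x,y)}w(dy)=1$ for all $x\in Y$). *)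

theory Defs
  imports "HOL-Analysis.Analysis"
begin

text \<open>Measures on a subset Y of the ambient metric space are represented as
finite Borel measures on the ambient type that give no mass to the complement
of Y. A finite signed Borel measure is represented as a pair (positive part,
negative part) of such measures, i.e. as their difference.\<close>

definition negative_type :: "'h::{real_inner,complete_space} itself \<Rightarrow> 'a::metric_space set \<Rightarrow> bool" where
  "negative_type _ X \<longleftrightarrow>
     (\<exists>f :: 'a \<Rightarrow> 'h. \<forall>x\<in>X. \<forall>y\<in>X. dist (f x) (f y) = sqrt (dist x y))"

definition fin_measures_on :: "'a::metric_space set \<Rightarrow> 'a measure set" where
  "fin_measures_on Y = {\<mu>. sets \<mu> = sets borel \<and> finite_measure \<mu> \<and> emeasure \<mu> (UNIV - Y) = 0}"

definition prob_measures_on :: "'a::metric_space set \<Rightarrow> 'a measure set" where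
  "prob_measures_on Y = {\<mu> \<in> fin_measures_on Y. emeasure \<mu> UNIV = 1}"

definition Zpair :: "'a::metric_space measure \<Rightarrow> 'a measure \<Rightarrow> real" where
  "Zpair \<mu> \<nu> = (\<integral>x. (\<integral>y. exp (- dist x y) \<partial>\<nu>) \<partial>\<mu>)"

definition Winner :: "'a::metric_space measure \<times> 'a measure \<Rightarrow> 'a measure \<times> 'a measure \<Rightarrow> real" where
  "Winner m n = Zpair (fst m) (fst n) - Zpair (fst m) (snd n) - Zpair (snd m) (fst n) + Zpair (snd m) (snd n)"

definition total_mass :: "'a::metric_space measure \<times> 'a measure \<Rightarrow> real" where
  "total_mass m = measure (fst m) UNIV - measure (snd m) UNIV"

definition magnitude :: "'a::metric_space set \<Rightarrow> ereal" where
  "magnitude Y = Sup {ereal (1 / Winner m m) | m.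
      fst m \<in> fin_measures_on Y \<and> snd m \<in> fin_measures_on Y \<and> total_mass m = 1}"

definition max_diversity :: "'a::metric_space set \<Rightarrow> ereal" where
  "max_diversity Y = Sup {ereal (1 / Zpair \<mu> \<mu>) | \<mu>. \<mu> \<in> prob_measures_on Y}"

definition positively_weighted :: "'a::metric_space set \<Rightarrow> bool" where
  "positively_weighted Y \<longleftrightarrow> (\<exists>\<mu> \<in> prob_measures_on Y. magnitude Y = ereal (1 / Zpair \<mu> \<mu>))"

definition diversity_maximizing :: "'a::metric_space set \<Rightarrow> 'a measure \<Rightarrow> bool" where
  "diversity_maximizing X \<mu> \<longleftrightarrow> \<mu> \<in> prob_measures_on X \<and> max_diversity X = ereal (1 / Zpair \<mu> \<mu>)"

definition support :: "'a::metric_space measure \<Rightarrow> 'a set" where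
  "support \<mu> = {x. \<forall>U. open U \<and> x \<in> U \<longrightarrow> emeasure \<mu> U > 0}"

end

theory Submission
  imports Defs "HOL-Probability.Probability_Mass_Function"
begin

text \<open>
  A diversity-maximizing probability measure \<mu> on X satisfies first-order conditions: its potential
  x \<mapsto> \<integral> exp (- d(x,y)) d\<mu>(y) is at least Z(\<mu>,\<mu>) on X and equals Z(\<mu>,\<mu>) on the support of \<mu>.
  Negative type makes exp (- d) the restriction of a Gaussian kernel on a Hilbert space, hence positive
  definite; approximating measures by their push-forwards to finite subsets transfers this to measures.
  For a signed measure m of mass one on the support, expanding the energy of m - \<mu> then gives
  Z(m,m) \<ge> 2 Z(m,\<mu>) - Z(\<mu>,\<mu>) = Z(\<mu>,\<mu>), so the support is positively weighted with magnitude
  1 / Z(\<mu>,\<mu>) = |X|_+.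
  Conversely, a positively weighted Y \<subseteq> X has magnitude 1 / Z(\<nu>,\<nu>) \<le> |X|_+ for a probability
  measure \<nu> on Y, and every probability measure on X is approximated in energy by measures on finite
  subsets F, whose diversity-maximizing measures (which exist by compactness of the simplex) have
  supports of magnitude |F|_+.
\<close>

section \<open>Positive definiteness of Gaussian kernels\<close>

lemma inner_residual_orthonormal:
  fixes v :: "'h::real_inner"
  assumes "finite E" "\<forall>e\<in>E. \<forall>e'\<in>E. inner e e' = (if e = e' then 1 else 0)" "e \<in> E"
  shows "inner (v - (\<Sum>e'\<in>E. inner v e' *\<^sub>R e')) e = 0"
proof -
  have "inner (\<Sum>e'\<in>E. inner v e' *\<^sub>R e') e = (\<Sum>e'\<in>E. if e' = e then inner v e else 0)"
    unfolding inner_sum_left by (rule sum.cong) (use assms(2,3) in auto)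
  then show ?thesis
    using assms(1,3) by (simp add: inner_diff_left)
qed

lemma orthonormal_expansion_insert:
  fixes v :: "'h::real_inner"
  assumes E: "finite E" "\<forall>e\<in>E. \<forall>e'\<in>E. inner e e' = (if e = e' then 1 else 0)"
      "\<forall>u\<in>U. u = (\<Sum>e\<in>E. inner u e *\<^sub>R e)"
    and w: "w = v - (\<Sum>e\<in>E. inner v e *\<^sub>R e)" "w \<noteq> 0"
  defines "e0 \<equiv> w /\<^sub>R norm w"
  shows "\<forall>e\<in>insert e0 E. \<forall>e'\<in>insert e0 E. inner e e' = (if e = e' then 1 else 0)"
    and "\<forall>u\<in>insert v U. u = (\<Sum>e\<in>insert e0 E. inner u e *\<^sub>R e)"
proof -
  have e0_orth: "inner e0 e = 0" "inner e e0 = 0" if "e \<in> E" for e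
    using inner_residual_orthonormal[OF E(1,2) that, of v]
    by (auto simp: e0_def w(1) inner_commute)
  have e0_unit: "inner e0 e0 = 1"
    using w(2) by (simp add: e0_def power2_norm_eq_inner[symmetric] power2_eq_square)
  show "\<forall>e\<in>insert e0 E. \<forall>e'\<in>insert e0 E. inner e e' = (if e = e' then 1 else 0)"
    using E(2) e0_orth e0_unit by auto
  have expand: "(\<Sum>e\<in>insert e0 E. inner u e *\<^sub>R e) = inner u e0 *\<^sub>R e0 + (\<Sum>e\<in>E. inner u e *\<^sub>R e)" for u
    using E(1) e0_orth e0_unit by (subst sum.insert) force+
  have "inner u e0 = 0" if "u \<in> U" for u
  proof -
    have u: "u = (\<Sum>e\<in>E. inner u e *\<^sub>R e)"
      using E(3) that by blast
    show ?thesis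
      by (subst u) (simp add: inner_sum_left e0_orth)
  qed
  moreover have "inner v e0 *\<^sub>R e0 = w"
  proof -
    have "inner v e0 = inner w e0"
      by (simp add: w(1) inner_diff_left inner_sum_left e0_orth)
    also have "\<dots> = norm w"
      using w(2) by (simp add: e0_def power2_norm_eq_inner[symmetric] power2_eq_square)
    finally show ?thesis
      using w(2) by (simp add: e0_def)
  qed
  ultimately show "\<forall>u\<in>insert v U. u = (\<Sum>e\<in>insert e0 E. inner u e *\<^sub>R e)"
    using E(3) expand w(1) by auto
qed

lemma finite_orthonormal_expansion:
  fixes U :: "'h::real_inner set"
  assumes "finite U"
  shows "\<exists>E. finite E \<and> (\<forall>e\<in>E. \<forall>e'\<in>E. inner e e' = (if e = e' then 1 else 0))
           \<and> (\<forall>u\<in>U. u = (\<Sum>e\<in>E. inner u e *\<^sub>R e))"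
  using assms
proof (induction U rule: finite_induct)
  case empty
  show ?case by (intro exI[of _ "{}"]) auto
next
  case (insert v U)
  then obtain E where E: "finite E" "\<forall>e\<in>E. \<forall>e'\<in>E. inner e e' = (if e = e' then 1 else 0)"
    "\<forall>u\<in>U. u = (\<Sum>e\<in>E. inner u e *\<^sub>R e)" by blast
  define w where "w = v - (\<Sum>e\<in>E. inner v e *\<^sub>R e)"
  show ?case
  proof (cases "w = 0")
    case True
    then show ?thesis using E by (intro exI[of _ E]) (auto simp: w_def)
  next
    case False
    then show ?thesis
      using orthonormal_expansion_insert[OF E w_def False] E(1)
      by (intro exI[of _ "insert (w /\<^sub>R norm w) E"]) simp
  qed
qed

lemma inner_power_psd:
  fixes u :: "'i \<Rightarrow> 'h::real_inner"
  assumes I: "finite I"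
  shows "0 \<le> (\<Sum>i\<in>I. \<Sum>j\<in>I. c i * c j * (inner (u i) (u j)) ^ k)"
proof (induction k arbitrary: c)
  case 0
  have "(\<Sum>i\<in>I. \<Sum>j\<in>I. c i * c j * (inner (u i) (u j)) ^ 0) = (\<Sum>i\<in>I. c i) * (\<Sum>j\<in>I. c j)"
    by (simp add: sum_product)
  then show ?case by simp
next
  case (Suc k)
  obtain E where E: "finite E" "\<forall>v\<in>u ` I. v = (\<Sum>e\<in>E. inner v e *\<^sub>R e)"
    using finite_orthonormal_expansion[OF finite_imageI[OF I]] by blast
  have inner_expand: "inner (u i) (u j) = (\<Sum>e\<in>E. inner (u i) e * inner (u j) e)" if "i \<in> I" for i j
  proof -
    have "inner (u i) (u j) = inner (\<Sum>e\<in>E. inner (u i) e *\<^sub>R e) (u j)"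
      using E(2) that by (metis image_eqI)
    also have "\<dots> = (\<Sum>e\<in>E. inner (u i) e * inner (u j) e)"
      unfolding inner_sum_left by (simp add: inner_commute)
    finally show ?thesis .
  qed
  have "(\<Sum>i\<in>I. \<Sum>j\<in>I. c i * c j * (inner (u i) (u j)) ^ Suc k)
      = (\<Sum>i\<in>I. \<Sum>j\<in>I. (c i * c j * (inner (u i) (u j)) ^ k) * inner (u i) (u j))"
    by (simp only: power_Suc2 mult.assoc)
  also have "\<dots> = (\<Sum>i\<in>I. \<Sum>j\<in>I. (c i * c j * (inner (u i) (u j)) ^ k)
                          * (\<Sum>e\<in>E. inner (u i) e * inner (u j) e))"
    by (intro sum.cong refl arg_cong2[where f="(*)"] inner_expand)
  also have "\<dots> = (\<Sum>i\<in>I. \<Sum>j\<in>I. \<Sum>e\<in>E.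
                      (c i * inner (u i) e) * (c j * inner (u j) e) * (inner (u i) (u j)) ^ k)"
    by (simp add: sum_distrib_left mult_ac)
  also have "\<dots> = (\<Sum>e\<in>E. \<Sum>i\<in>I. \<Sum>j\<in>I.
                      (c i * inner (u i) e) * (c j * inner (u j) e) * (inner (u i) (u j)) ^ k)"
    by (simp only: sum.swap[where B=E])
  also have "\<dots> \<ge> 0"
    by (rule sum_nonneg) (rule Suc.IH)
  finally show ?case .
qed

lemma exp_inner_psd:
  fixes u :: "'i \<Rightarrow> 'h::real_inner"
  assumes I: "finite I"
  shows "0 \<le> (\<Sum>i\<in>I. \<Sum>j\<in>I. c i * c j * exp (2 * inner (u i) (u j)))"
proof -
  have series_term: "c i * c j * ((2 * inner (u i) (u j)) ^ n /\<^sub>R fact n)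
      = (2 ^ n / fact n) * (c i * c j * (inner (u i) (u j)) ^ n)" for i j n
    by (simp add: power_mult_distrib divide_inverse mult_ac)
  have series: "(\<lambda>n. \<Sum>i\<in>I. \<Sum>j\<in>I. c i * c j * ((2 * inner (u i) (u j)) ^ n /\<^sub>R fact n))
      sums (\<Sum>i\<in>I. \<Sum>j\<in>I. c i * c j * exp (2 * inner (u i) (u j)))"
    by (intro sums_sum sums_mult exp_converges)
  have partial_nonneg: "0 \<le> (\<Sum>i\<in>I. \<Sum>j\<in>I. c i * c j * ((2 * inner (u i) (u j)) ^ n /\<^sub>R fact n))" for n
    unfolding series_term sum_distrib_left[symmetric] by (intro mult_nonneg_nonneg inner_power_psd I) auto
  show ?thesis
    by (rule sums_le[OF partial_nonneg sums_zero series])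
qed

lemma gaussian_kernel_psd:
  fixes u :: "'i \<Rightarrow> 'h::real_inner"
  assumes I: "finite I"
  shows "0 \<le> (\<Sum>i\<in>I. \<Sum>j\<in>I. c i * c j * exp (- (norm (u i - u j))\<^sup>2))"
proof -
  define d where "d i = c i * exp (- (norm (u i))\<^sup>2)" for i
  have "exp (- (norm (u i - u j))\<^sup>2)
      = exp (- (norm (u i))\<^sup>2) * exp (- (norm (u j))\<^sup>2) * exp (2 * inner (u i) (u j))" for i j
  proof -
    have "(norm (u i - u j))\<^sup>2 = (norm (u i))\<^sup>2 + (norm (u j))\<^sup>2 - 2 * inner (u i) (u j)"
      by (simp add: power2_norm_eq_inner inner_diff_left inner_diff_right inner_commute)
    then show ?thesis by (simp add: exp_add[symmetric] exp_diff)
  qed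
  then have "(\<Sum>i\<in>I. \<Sum>j\<in>I. c i * c j * exp (- (norm (u i - u j))\<^sup>2))
      = (\<Sum>i\<in>I. \<Sum>j\<in>I. d i * d j * exp (2 * inner (u i) (u j)))"
    by (simp add: d_def mult_ac)
  also have "\<dots> \<ge> 0" by (rule exp_inner_psd[OF I])
  finally show ?thesis .
qed

lemma negative_type_subset:
  "negative_type TYPE('h::{real_inner,complete_space}) X \<Longrightarrow> Y \<subseteq> X \<Longrightarrow> negative_type TYPE('h) Y"
  unfolding negative_type_def by blast

lemma exp_neg_dist_psd:
  fixes X :: "'a::metric_space set"
  assumes "negative_type TYPE('h::{real_inner,complete_space}) X" "finite F" "F \<subseteq> X"
  shows "0 \<le> (\<Sum>x\<in>F. \<Sum>y\<in>F. a x * a y * exp (- dist x y))"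
proof -
  obtain f :: "'a \<Rightarrow> 'h" where f: "\<And>x y. x \<in> X \<Longrightarrow> y \<in> X \<Longrightarrow> dist (f x) (f y) = sqrt (dist x y)"
    using assms(1) unfolding negative_type_def by blast
  have "dist x y = (norm (f x - f y))\<^sup>2" if "x \<in> F" "y \<in> F" for x y
  proof -
    have "norm (f x - f y) = sqrt (dist x y)"
      using f[of x y] that assms(3) by (auto simp: dist_norm)
    then show ?thesis by simp
  qed
  then have "(\<Sum>x\<in>F. \<Sum>y\<in>F. a x * a y * exp (- dist x y))
      = (\<Sum>x\<in>F. \<Sum>y\<in>F. a x * a y * exp (- (norm (f x - f y))\<^sup>2))"
    by (intro sum.cong) auto
  also have "\<dots> \<ge> 0" by (rule gaussian_kernel_psd[OF assms(2)])
  finally show ?thesis .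
qed

section \<open>Potentials and energies of finite measures\<close>

lemma measurable_sets_borel:
  "sets M = sets borel \<Longrightarrow> f \<in> borel \<rightarrow>\<^sub>M N \<Longrightarrow> f \<in> M \<rightarrow>\<^sub>M N"
  using measurable_cong_sets[of M borel N N] by simp

lemma (in finite_measure) abs_integral_diff_le:
  fixes f g :: "'a \<Rightarrow> real"
  assumes "integrable M f" "integrable M g" "AE x in M. \<bar>f x - g x\<bar> \<le> B"
  shows "\<bar>integral\<^sup>L M f - integral\<^sup>L M g\<bar> \<le> B * measure M (space M)"
proof -
  have "\<bar>integral\<^sup>L M f - integral\<^sup>L M g\<bar> = \<bar>\<integral>x. f x - g x \<partial>M\<bar>"
    using assms(1,2) by simp
  also have "\<dots> \<le> (\<integral>x. \<bar>f x - g x\<bar> \<partial>M)"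
    by (rule integral_abs_bound)
  also have "\<dots> \<le> (\<integral>x. B \<partial>M)"
    using assms by (intro integral_mono_AE) auto
  finally show ?thesis by (simp add: mult.commute)
qed

lemma field_le_epsilon_mult:
  fixes x y C :: real
  assumes "\<And>\<delta>. 0 < \<delta> \<Longrightarrow> x \<le> y + \<delta> * C"
  shows "x \<le> y"
proof (rule field_le_epsilon)
  fix e :: real assume "0 < e"
  then have "x \<le> y + e / (\<bar>C\<bar> + 1) * C" by (intro assms) simp
  also have "e / (\<bar>C\<bar> + 1) * C \<le> e / (\<bar>C\<bar> + 1) * \<bar>C\<bar>"
    using \<open>0 < e\<close> by (intro mult_left_mono) auto
  also have "\<dots> \<le> e"
    using \<open>0 < e\<close> by (simp add: field_simps)
  finally show "x \<le> y + e" by simp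
qed

lemma abs_exp_neg_diff_le:
  fixes a b :: real
  assumes "0 \<le> a" "0 \<le> b"
  shows "\<bar>exp (- a) - exp (- b)\<bar> \<le> \<bar>a - b\<bar>"
proof -
  have *: "exp (- a) - exp (- b) \<le> b - a" if "0 \<le> a" "a \<le> b" for a b :: real
  proof -
    have "exp (- a) - exp (- b) = exp (- a) * (1 - exp (a - b))"
      by (simp add: algebra_simps flip: exp_add)
    also have "\<dots> \<le> 1 - exp (a - b)"
      using that by (intro mult_left_le_one_le) auto
    also have "\<dots> \<le> b - a"
      using exp_ge_add_one_self[of "a - b"] by linarith
    finally show ?thesis .
  qed
  show ?thesis
    using *[of a b] *[of b a] assms by (cases "a \<le> b") auto
qed

lemma exp_neg_dist_lipschitz:
  "\<bar>exp (- dist x y) - exp (- dist x' y')\<bar> \<le> dist x x' + dist y y'"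
proof -
  have "\<bar>exp (- dist x y) - exp (- dist x' y')\<bar> \<le> \<bar>dist x y - dist x' y'\<bar>"
    by (rule abs_exp_neg_diff_le) auto
  also have "\<dots> \<le> dist x x' + dist y y'"
    using dist_triangle[of x y x'] dist_triangle[of x' y y'] dist_triangle[of x' y' x]
      dist_triangle[of x y' y] dist_commute[of x x'] dist_commute[of y y'] by linarith
  finally show ?thesis .
qed

lemma borel_measurable_exp_neg_dist [measurable]: "(\<lambda>y. exp (- dist x y)) \<in> borel_measurable borel"
  by (intro borel_measurable_continuous_onI continuous_intros)

definition potential :: "'a::metric_space measure \<Rightarrow> 'a \<Rightarrow> real" where
  "potential \<nu> x = (\<integral>y. exp (- dist x y) \<partial>\<nu>)"

lemma Zpair_eq_integral_potential: "Zpair \<mu> \<nu> = (\<integral>x. potential \<nu> x \<partial>\<mu>)"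
  unfolding Zpair_def potential_def ..

context
  fixes \<nu> :: "'a::metric_space measure"
  assumes finite: "finite_measure \<nu>" and sets_borel: "sets \<nu> = sets borel"
begin

lemma integrable_exp_neg_dist: "integrable \<nu> (\<lambda>y. exp (- dist x y))"
  by (rule finite_measure.integrable_const_bound[OF finite, where B=1])
     (auto intro: measurable_sets_borel[OF sets_borel])

lemma potential_nonneg: "0 \<le> potential \<nu> x"
  unfolding potential_def by (rule integral_nonneg_AE) auto

lemma potential_le: "potential \<nu> x \<le> measure \<nu> UNIV"
proof -
  have "potential \<nu> x \<le> (\<integral>y. 1 \<partial>\<nu>)"
    unfolding potential_def
    by (rule integral_mono) (auto simp: integrable_exp_neg_dist finite_measure.integrable_const[OF finite])
  then show ?thesis using sets_eq_imp_space_eq[OF sets_borel] by simp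
qed

lemma potential_lipschitz: "\<bar>potential \<nu> x - potential \<nu> x'\<bar> \<le> dist x x' * measure \<nu> UNIV"
proof -
  have "\<bar>potential \<nu> x - potential \<nu> x'\<bar> \<le> dist x x' * measure \<nu> (space \<nu>)"
    unfolding potential_def
  proof (intro finite_measure.abs_integral_diff_le[OF finite] integrable_exp_neg_dist AE_I2)
    fix y
    show "\<bar>exp (- dist x y) - exp (- dist x' y)\<bar> \<le> dist x x'"
      using exp_neg_dist_lipschitz[of x y x' y] by simp
  qed
  then show ?thesis using sets_eq_imp_space_eq[OF sets_borel] by simp
qed

lemma continuous_potential: "continuous_on UNIV (potential \<nu>)"
  by (rule lipschitz_on_continuous_on[where L="measure \<nu> UNIV"], rule lipschitz_onI)
     (use potential_lipschitz in \<open>auto simp: dist_real_def mult.commute\<close>)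

lemma borel_measurable_potential [measurable]: "potential \<nu> \<in> borel_measurable borel"
  by (rule borel_measurable_continuous_onI[OF continuous_potential])

lemma integrable_potential:
  assumes "finite_measure \<mu>" "sets \<mu> = sets borel"
  shows "integrable \<mu> (potential \<nu>)"
  by (rule finite_measure.integrable_const_bound[OF assms(1), where B="measure \<nu> UNIV"])
     (use potential_nonneg potential_le measurable_sets_borel[OF assms(2) borel_measurable_potential]
       in auto)

end

lemma fin_measures_onD:
  assumes "\<mu> \<in> fin_measures_on Y"
  shows "sets \<mu> = sets borel" "finite_measure \<mu>" "emeasure \<mu> (UNIV - Y) = 0" "space \<mu> = UNIV"
  using assms sets_eq_imp_space_eq[of \<mu> borel] unfolding fin_measures_on_def by auto

lemma prob_measures_onD:
  assumes "\<mu> \<in> prob_measures_on Y"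
  shows "\<mu> \<in> fin_measures_on Y" "measure \<mu> UNIV = 1" "prob_space \<mu>"
proof -
  show fin: "\<mu> \<in> fin_measures_on Y" using assms by (simp add: prob_measures_on_def)
  have "emeasure \<mu> UNIV = 1" using assms by (simp add: prob_measures_on_def)
  then show "measure \<mu> UNIV = 1" "prob_space \<mu>"
    using fin_measures_onD(4)[OF fin] by (auto simp: measure_def intro!: prob_spaceI)
qed

lemma AE_in_fin_measures_on:
  assumes "\<mu> \<in> fin_measures_on Y" "Y \<in> sets borel"
  shows "AE x in \<mu>. x \<in> Y"
  by (rule AE_I'[of "UNIV - Y"]) (use fin_measures_onD[OF assms(1)] assms(2) in auto)

lemma fin_measures_on_mono:
  assumes "Y \<subseteq> Z" "Y \<in> sets borel"
  shows "fin_measures_on Y \<subseteq> fin_measures_on Z"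
proof
  fix \<mu> assume \<mu>: "\<mu> \<in> fin_measures_on Y"
  have "emeasure \<mu> (UNIV - Z) \<le> emeasure \<mu> (UNIV - Y)"
    using assms fin_measures_onD[OF \<mu>] by (intro emeasure_mono) auto
  then show "\<mu> \<in> fin_measures_on Z"
    using \<mu> fin_measures_onD[OF \<mu>] by (simp add: fin_measures_on_def)
qed

lemma prob_measures_on_mono:
  "Y \<subseteq> Z \<Longrightarrow> Y \<in> sets borel \<Longrightarrow> prob_measures_on Y \<subseteq> prob_measures_on Z"
  using fin_measures_on_mono unfolding prob_measures_on_def by blast

lemma integral_finite_support:
  fixes g :: "'a::metric_space \<Rightarrow> real"
  assumes F: "finite F" and \<nu>: "\<nu> \<in> fin_measures_on F" and g: "g \<in> borel_measurable borel"
  shows "integral\<^sup>L \<nu> g = (\<Sum>x\<in>F. g x * measure \<nu> {x})"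
proof -
  note \<nu>' = fin_measures_onD[OF \<nu>]
  have "integral\<^sup>L \<nu> g = (\<integral>y. (\<Sum>x\<in>F. g x * indicator {x} y) \<partial>\<nu>)"
  proof (rule integral_cong_AE)
    show "AE y in \<nu>. g y = (\<Sum>x\<in>F. g x * indicator {x} y)"
      using AE_in_fin_measures_on[OF \<nu> borel_closed[OF finite_imp_closed[OF F]]]
    proof eventually_elim
      case (elim y)
      have "(\<Sum>x\<in>F. g x * indicator {x} y) = (\<Sum>x\<in>F. if x = y then g y else 0)"
        by (rule sum.cong) (auto simp: indicator_def)
      also have "\<dots> = g y" using elim F by simp
      finally show ?case by simp
    qed
  qed (use g in \<open>auto intro!: measurable_sets_borel[OF \<nu>'(1)]\<close>)
  also have "\<dots> = (\<Sum>x\<in>F. \<integral>y. g x * indicator {x} y \<partial>\<nu>)"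
    using \<nu>'(1) finite_measure.emeasure_finite[OF \<nu>'(2)]
    by (intro Bochner_Integration.integral_sum integrable_mult_right integrable_real_indicator)
       (auto simp: top.not_eq_extremum)
  also have "\<dots> = (\<Sum>x\<in>F. g x * measure \<nu> {x})"
    using \<nu>'(1) by simp
  finally show ?thesis .
qed

lemma Zpair_finite_support:
  assumes "finite F" "\<alpha> \<in> fin_measures_on F" "\<beta> \<in> fin_measures_on F"
  shows "Zpair \<alpha> \<beta> = (\<Sum>x\<in>F. \<Sum>y\<in>F. measure \<alpha> {x} * measure \<beta> {y} * exp (- dist x y))"
proof -
  note \<beta>' = fin_measures_onD[OF assms(3)]
  have "potential \<beta> x = (\<Sum>y\<in>F. exp (- dist x y) * measure \<beta> {y})" for x
    unfolding potential_def by (rule integral_finite_support[OF assms(1,3)]) simp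
  then show ?thesis
    unfolding Zpair_eq_integral_potential
    by (subst integral_finite_support[OF assms(1,2) borel_measurable_potential[OF \<beta>'(2,1)]])
       (simp add: sum_distrib_left sum_distrib_right mult_ac)
qed

lemma Zpair_commute_finite_support:
  assumes "finite F" "\<alpha> \<in> fin_measures_on F" "\<beta> \<in> fin_measures_on F"
  shows "Zpair \<alpha> \<beta> = Zpair \<beta> \<alpha>"
  unfolding Zpair_finite_support[OF assms] Zpair_finite_support[OF assms(1,3,2)]
  by (subst sum.swap) (simp add: dist_commute mult_ac)

lemma Zpair_quadratic_form_finite_support:
  assumes "finite F" "\<And>q. q \<in> J \<Longrightarrow> \<alpha> q \<in> fin_measures_on F"
  shows "(\<Sum>q\<in>J. \<Sum>r\<in>J. c q * c r * Zpair (\<alpha> q) (\<alpha> r))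
       = (\<Sum>x\<in>F. \<Sum>y\<in>F. (\<Sum>q\<in>J. c q * measure (\<alpha> q) {x}) * (\<Sum>r\<in>J. c r * measure (\<alpha> r) {y})
                          * exp (- dist x y))"
proof -
  have "(\<Sum>q\<in>J. \<Sum>r\<in>J. c q * c r * Zpair (\<alpha> q) (\<alpha> r))
      = (\<Sum>q\<in>J. \<Sum>r\<in>J. \<Sum>x\<in>F. \<Sum>y\<in>F.
           c q * measure (\<alpha> q) {x} * (c r * measure (\<alpha> r) {y}) * exp (- dist x y))"
    by (intro sum.cong refl) (simp add: Zpair_finite_support[OF assms(1)] assms sum_distrib_left mult_ac)
  also have "\<dots> = (\<Sum>x\<in>F. \<Sum>y\<in>F. \<Sum>q\<in>J. \<Sum>r\<in>J.
           c q * measure (\<alpha> q) {x} * (c r * measure (\<alpha> r) {y}) * exp (- dist x y))"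
    by (simp only: sum.swap[where A=J and B=F])
  also have "\<dots> = (\<Sum>x\<in>F. \<Sum>y\<in>F. (\<Sum>q\<in>J. c q * measure (\<alpha> q) {x})
                          * (\<Sum>r\<in>J. c r * measure (\<alpha> r) {y}) * exp (- dist x y))"
    by (simp only: sum_product) (simp only: sum_distrib_right)
  finally show ?thesis .
qed

section \<open>Quantization: symmetry and positive definiteness of the energy\<close>

lemma measurable_first_ball_index:
  fixes ps :: "'a::metric_space list"
  shows "(\<lambda>x. LEAST i. i < length ps \<and> x \<in> ball (ps ! i) \<delta>) \<in> borel \<rightarrow>\<^sub>M count_space UNIV"
proof (rule measurable_Least)
  fix i
  have "{x. i < length ps \<and> x \<in> ball (ps ! i) \<delta>} = (if i < length ps then ball (ps ! i) \<delta> else {})"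
    by auto
  then show "Measurable.pred borel (\<lambda>x. i < length ps \<and> x \<in> ball (ps ! i) \<delta>)"
    by (simp add: pred_def borel_open)
qed

lemma quantizer_exists:
  fixes X :: "'a::metric_space set"
  assumes "compact X" "0 < \<delta>"
  obtains F and Q :: "'a \<Rightarrow> 'a" where "finite F" "F \<subseteq> X" "Q \<in> borel \<rightarrow>\<^sub>M borel"
    "\<And>x. x \<in> X \<Longrightarrow> Q x \<in> F" "\<And>x. x \<in> X \<Longrightarrow> dist x (Q x) < \<delta>"
proof -
  have "X \<subseteq> (\<Union>c\<in>X. ball c \<delta>)"
    using assms(2) by auto
  then obtain C where C: "C \<subseteq> X" "finite C" "X \<subseteq> (\<Union>c\<in>C. ball c \<delta>)"
    using compactE_image[OF assms(1), of X "\<lambda>c. ball c \<delta>"] by blast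
  obtain ps where ps: "set ps = C"
    using finite_list[OF C(2)] by blast
  define idx where "idx x = (LEAST i. i < length ps \<and> x \<in> ball (ps ! i) \<delta>)" for x
  have idx: "idx x < length ps \<and> x \<in> ball (ps ! idx x) \<delta>" if x: "x \<in> X" for x
  proof -
    obtain c where "c \<in> C" "x \<in> ball c \<delta>"
      using C(3) x by blast
    moreover obtain i where "i < length ps" "ps ! i = c"
      using \<open>c \<in> C\<close> ps by (metis in_set_conv_nth)
    ultimately have "i < length ps \<and> x \<in> ball (ps ! i) \<delta>"
      by simp
    then show ?thesis
      unfolding idx_def by (rule LeastI)
  qed
  have measurable: "(\<lambda>x. ps ! idx x) \<in> borel \<rightarrow>\<^sub>M borel"
    unfolding idx_def by (rule measurable_compose[OF measurable_first_ball_index]) simp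
  show thesis
  proof (rule that[of "set ps" "\<lambda>x. ps ! idx x"])
    show "finite (set ps)" "set ps \<subseteq> X"
      using C(1) ps by auto
    show "ps ! idx x \<in> set ps" "dist x (ps ! idx x) < \<delta>" if "x \<in> X" for x
      using idx[OF that] by (auto simp: dist_commute)
  qed (rule measurable)
qed

lemma distr_in_fin_measures_on:
  assumes \<alpha>: "\<alpha> \<in> fin_measures_on X" and X: "X \<in> sets borel" and F: "F \<in> sets borel"
    and Q: "Q \<in> borel \<rightarrow>\<^sub>M borel" "\<And>x. x \<in> X \<Longrightarrow> Q x \<in> F"
  shows "distr \<alpha> borel Q \<in> fin_measures_on F"
    and "emeasure (distr \<alpha> borel Q) UNIV = emeasure \<alpha> UNIV"
proof -
  note \<alpha>' = fin_measures_onD[OF \<alpha>]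
  have Q\<alpha>: "Q \<in> \<alpha> \<rightarrow>\<^sub>M borel"
    by (rule measurable_sets_borel[OF \<alpha>'(1) Q(1)])
  have "emeasure (distr \<alpha> borel Q) (UNIV - F) = emeasure \<alpha> (Q -` (UNIV - F))"
    using F Q\<alpha> \<alpha>'(4) by (simp add: emeasure_distr)
  also have "\<dots> \<le> emeasure \<alpha> (UNIV - X)"
    using Q X \<alpha>'(1) by (intro emeasure_mono) auto
  finally have "emeasure (distr \<alpha> borel Q) (UNIV - F) = 0"
    using \<alpha>'(3) by simp
  then show "distr \<alpha> borel Q \<in> fin_measures_on F"
    using finite_measure.finite_measure_distr[OF \<alpha>'(2) Q\<alpha>] by (simp add: fin_measures_on_def)
  show "emeasure (distr \<alpha> borel Q) UNIV = emeasure \<alpha> UNIV"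
    using Q\<alpha> \<alpha>'(4) by (simp add: emeasure_distr)
qed

lemma distr_in_prob_measures_on:
  assumes "\<alpha> \<in> prob_measures_on X" "X \<in> sets borel" "F \<in> sets borel"
    "Q \<in> borel \<rightarrow>\<^sub>M borel" "\<And>x. x \<in> X \<Longrightarrow> Q x \<in> F"
  shows "distr \<alpha> borel Q \<in> prob_measures_on F"
  using distr_in_fin_measures_on[OF prob_measures_onD(1)[OF assms(1)] assms(2-)] assms(1)
  by (simp add: prob_measures_on_def)

lemma potential_distr_diff_le:
  assumes \<beta>: "\<beta> \<in> fin_measures_on X" and X: "X \<in> sets borel"
    and Q: "Q \<in> borel \<rightarrow>\<^sub>M borel" and close: "\<And>x. x \<in> X \<Longrightarrow> dist x (Q x) \<le> \<delta>"
    and x: "x \<in> X"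
  shows "\<bar>potential \<beta> x - potential (distr \<beta> borel Q) (Q x)\<bar> \<le> 2 * \<delta> * measure \<beta> UNIV"
proof -
  note \<beta>' = fin_measures_onD[OF \<beta>]
  have Q\<beta>: "Q \<in> \<beta> \<rightarrow>\<^sub>M borel"
    by (rule measurable_sets_borel[OF \<beta>'(1) Q])
  have "(\<lambda>y. exp (- dist (Q x) (Q y))) \<in> borel_measurable \<beta>"
    using Q\<beta> by (rule measurable_compose) simp
  then have "integrable \<beta> (\<lambda>y. exp (- dist (Q x) (Q y)))"
    by (intro finite_measure.integrable_const_bound[OF \<beta>'(2), where B=1]) auto
  moreover have "AE y in \<beta>. \<bar>exp (- dist x y) - exp (- dist (Q x) (Q y))\<bar> \<le> 2 * \<delta>"
    using AE_in_fin_measures_on[OF \<beta> X]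
  proof eventually_elim
    case (elim y)
    then show ?case
      using exp_neg_dist_lipschitz[of x y "Q x" "Q y"] close[OF x] close[OF elim] by linarith
  qed
  moreover have "potential (distr \<beta> borel Q) (Q x) = (\<integral>y. exp (- dist (Q x) (Q y)) \<partial>\<beta>)"
    unfolding potential_def by (rule integral_distr[OF Q\<beta>]) simp
  ultimately show ?thesis
    using finite_measure.abs_integral_diff_le[OF \<beta>'(2) integrable_exp_neg_dist[OF \<beta>'(2,1)]] \<beta>'(4)
    by (simp add: potential_def)
qed

lemma Zpair_distr_diff_le:
  assumes \<alpha>: "\<alpha> \<in> fin_measures_on X" and \<beta>: "\<beta> \<in> fin_measures_on X" and X: "X \<in> sets borel"
    and Q: "Q \<in> borel \<rightarrow>\<^sub>M borel" and close: "\<And>x. x \<in> X \<Longrightarrow> dist x (Q x) \<le> \<delta>"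
  shows "\<bar>Zpair \<alpha> \<beta> - Zpair (distr \<alpha> borel Q) (distr \<beta> borel Q)\<bar>
           \<le> 2 * \<delta> * measure \<alpha> UNIV * measure \<beta> UNIV"
proof -
  note \<alpha>' = fin_measures_onD[OF \<alpha>] and \<beta>' = fin_measures_onD[OF \<beta>]
  have Q\<alpha>: "Q \<in> \<alpha> \<rightarrow>\<^sub>M borel"
    by (rule measurable_sets_borel[OF \<alpha>'(1) Q])
  have \<beta>Q: "finite_measure (distr \<beta> borel Q)" "sets (distr \<beta> borel Q) = sets borel"
    using finite_measure.finite_measure_distr[OF \<beta>'(2) measurable_sets_borel[OF \<beta>'(1) Q]] by auto
  have "(\<lambda>x. potential (distr \<beta> borel Q) (Q x)) \<in> borel_measurable \<alpha>"
    using Q\<alpha> borel_measurable_potential[OF \<beta>Q] by (rule measurable_compose)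
  then have "integrable \<alpha> (\<lambda>x. potential (distr \<beta> borel Q) (Q x))"
    using potential_nonneg[OF \<beta>Q] potential_le[OF \<beta>Q]
    by (intro finite_measure.integrable_const_bound[OF \<alpha>'(2)]) auto
  moreover have "AE x in \<alpha>. \<bar>potential \<beta> x - potential (distr \<beta> borel Q) (Q x)\<bar> \<le> 2 * \<delta> * measure \<beta> UNIV"
    using AE_in_fin_measures_on[OF \<alpha> X]
    by eventually_elim (rule potential_distr_diff_le[OF \<beta> X Q close])
  ultimately have "\<bar>(\<integral>x. potential \<beta> x \<partial>\<alpha>) - (\<integral>x. potential (distr \<beta> borel Q) (Q x) \<partial>\<alpha>)\<bar>
      \<le> 2 * \<delta> * measure \<beta> UNIV * measure \<alpha> (space \<alpha>)"
    by (intro finite_measure.abs_integral_diff_le[OF \<alpha>'(2) integrable_potential[OF \<beta>'(2,1) \<alpha>'(2,1)]])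
  moreover have "Zpair (distr \<alpha> borel Q) (distr \<beta> borel Q) = (\<integral>x. potential (distr \<beta> borel Q) (Q x) \<partial>\<alpha>)"
    unfolding Zpair_eq_integral_potential by (rule integral_distr[OF Q\<alpha> borel_measurable_potential[OF \<beta>Q]])
  ultimately show ?thesis
    using \<alpha>'(4) by (simp add: Zpair_eq_integral_potential[of \<alpha> \<beta>] mult_ac)
qed

lemma abs_diff_le_imp_mult_le:
  fixes a b e k :: real
  assumes "\<bar>a - b\<bar> \<le> e"
  shows "k * b \<le> k * a + \<bar>k\<bar> * e"
proof -
  have "k * (b - a) \<le> \<bar>k\<bar> * \<bar>a - b\<bar>"
    by (metis abs_ge_self abs_minus_commute abs_mult)
  also have "\<dots> \<le> \<bar>k\<bar> * e"
    using assms by (intro mult_left_mono) auto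
  finally show ?thesis by (simp add: algebra_simps)
qed

lemma Zpair_commute:
  assumes X: "compact X" and \<alpha>: "\<alpha> \<in> fin_measures_on X" and \<beta>: "\<beta> \<in> fin_measures_on X"
  shows "Zpair \<alpha> \<beta> = Zpair \<beta> \<alpha>"
proof -
  note XB = borel_compact[OF X]
  define M where "M = measure \<alpha> UNIV * measure \<beta> UNIV"
  have "\<bar>Zpair \<alpha> \<beta> - Zpair \<beta> \<alpha>\<bar> \<le> 0 + \<delta> * (4 * M)" if \<delta>: "0 < \<delta>" for \<delta>
  proof -
    obtain F Q where F: "finite F" "F \<subseteq> X" and Q: "Q \<in> borel \<rightarrow>\<^sub>M borel"
      "\<And>x. x \<in> X \<Longrightarrow> Q x \<in> F" "\<And>x. x \<in> X \<Longrightarrow> dist x (Q x) < \<delta>"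
      using quantizer_exists[OF X \<delta>] by blast
    have FB: "F \<in> sets borel"
      using F(1) by (simp add: finite_imp_compact borel_compact)
    have "Zpair (distr \<alpha> borel Q) (distr \<beta> borel Q) = Zpair (distr \<beta> borel Q) (distr \<alpha> borel Q)"
      by (intro Zpair_commute_finite_support[OF F(1)] distr_in_fin_measures_on(1)[OF _ XB FB Q(1,2)] \<alpha> \<beta>)
    moreover have "\<bar>Zpair \<alpha> \<beta> - Zpair (distr \<alpha> borel Q) (distr \<beta> borel Q)\<bar> \<le> 2 * \<delta> * M"
      unfolding M_def mult.assoc[symmetric]
      by (intro Zpair_distr_diff_le[OF \<alpha> \<beta> XB Q(1)] less_imp_le Q(3))
    moreover have "\<bar>Zpair \<beta> \<alpha> - Zpair (distr \<beta> borel Q) (distr \<alpha> borel Q)\<bar> \<le> 2 * \<delta> * M"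
      unfolding M_def mult.commute[of "measure \<alpha> UNIV"] mult.assoc[symmetric]
      by (intro Zpair_distr_diff_le[OF \<beta> \<alpha> XB Q(1)] less_imp_le Q(3))
    ultimately show ?thesis by linarith
  qed
  then have "\<bar>Zpair \<alpha> \<beta> - Zpair \<beta> \<alpha>\<bar> \<le> 0"
    by (rule field_le_epsilon_mult)
  then show ?thesis by simp
qed

lemma Zpair_psd:
  fixes X :: "'a::metric_space set"
  assumes X: "compact X" and neg: "negative_type TYPE('h::{real_inner,complete_space}) X"
    and J: "finite J" and \<alpha>: "\<And>q. q \<in> J \<Longrightarrow> \<alpha> q \<in> fin_measures_on X"
  shows "0 \<le> (\<Sum>q\<in>J. \<Sum>r\<in>J. c q * c r * Zpair (\<alpha> q) (\<alpha> r))"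
proof -
  note XB = borel_compact[OF X]
  define C where "C = (\<Sum>q\<in>J. \<Sum>r\<in>J. 2 * \<bar>c q * c r\<bar> * (measure (\<alpha> q) UNIV * measure (\<alpha> r) UNIV))"
  have "0 \<le> (\<Sum>q\<in>J. \<Sum>r\<in>J. c q * c r * Zpair (\<alpha> q) (\<alpha> r)) + \<delta> * C" if \<delta>: "0 < \<delta>" for \<delta>
  proof -
    obtain F Q where F: "finite F" "F \<subseteq> X" and Q: "Q \<in> borel \<rightarrow>\<^sub>M borel"
      "\<And>x. x \<in> X \<Longrightarrow> Q x \<in> F" "\<And>x. x \<in> X \<Longrightarrow> dist x (Q x) < \<delta>"
      using quantizer_exists[OF X \<delta>] by blast
    have FB: "F \<in> sets borel"
      using F(1) by (simp add: finite_imp_compact borel_compact)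
    define \<alpha>' where "\<alpha>' q = distr (\<alpha> q) borel Q" for q
    have \<alpha>'F: "\<alpha>' q \<in> fin_measures_on F" if "q \<in> J" for q
      unfolding \<alpha>'_def by (rule distr_in_fin_measures_on(1)[OF \<alpha>[OF that] XB FB Q(1,2)])
    have close: "c q * c r * Zpair (\<alpha>' q) (\<alpha>' r)
        \<le> c q * c r * Zpair (\<alpha> q) (\<alpha> r) + \<delta> * (2 * \<bar>c q * c r\<bar> * (measure (\<alpha> q) UNIV * measure (\<alpha> r) UNIV))"
      if "q \<in> J" "r \<in> J" for q r
    proof -
      have "\<bar>Zpair (\<alpha> q) (\<alpha> r) - Zpair (\<alpha>' q) (\<alpha>' r)\<bar> \<le> 2 * \<delta> * measure (\<alpha> q) UNIV * measure (\<alpha> r) UNIV"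
        unfolding \<alpha>'_def using that by (intro Zpair_distr_diff_le[OF \<alpha> \<alpha> XB Q(1)] less_imp_le Q(3))
      then have "c q * c r * Zpair (\<alpha>' q) (\<alpha>' r) \<le> c q * c r * Zpair (\<alpha> q) (\<alpha> r)
          + \<bar>c q * c r\<bar> * (2 * \<delta> * measure (\<alpha> q) UNIV * measure (\<alpha> r) UNIV)"
        by (rule abs_diff_le_imp_mult_le)
      then show ?thesis by (simp add: mult_ac)
    qed
    have "0 \<le> (\<Sum>q\<in>J. \<Sum>r\<in>J. c q * c r * Zpair (\<alpha>' q) (\<alpha>' r))"
      using Zpair_quadratic_form_finite_support[OF F(1) \<alpha>'F, where c=c] exp_neg_dist_psd[OF neg F(1,2)]
      by simp
    also have "\<dots> \<le> (\<Sum>q\<in>J. \<Sum>r\<in>J. c q * c r * Zpair (\<alpha> q) (\<alpha> r)) + \<delta> * C"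
      unfolding C_def sum_distrib_left sum.distrib[symmetric] by (intro sum_mono close)
    finally show ?thesis .
  qed
  then show ?thesis by (rule field_le_epsilon_mult)
qed

lemma Zpair_lower_bound:
  assumes \<alpha>: "\<alpha> \<in> fin_measures_on X" and \<beta>: "\<beta> \<in> fin_measures_on X"
    and X: "X \<in> sets borel" "bounded X"
  shows "exp (- diameter X) * measure \<alpha> UNIV * measure \<beta> UNIV \<le> Zpair \<alpha> \<beta>"
proof -
  note \<alpha>' = fin_measures_onD[OF \<alpha>] and \<beta>' = fin_measures_onD[OF \<beta>]
  have pointwise: "exp (- diameter X) * measure \<beta> UNIV \<le> potential \<beta> x" if "x \<in> X" for x
  proof -
    have "AE y in \<beta>. exp (- diameter X) \<le> exp (- dist x y)"
      using AE_in_fin_measures_on[OF \<beta> X(1)]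
      by eventually_elim (use diameter_bounded_bound[OF X(2) that] in simp)
    then have "(\<integral>y. exp (- diameter X) \<partial>\<beta>) \<le> potential \<beta> x"
      unfolding potential_def
      by (intro integral_mono_AE finite_measure.integrable_const[OF \<beta>'(2)] integrable_exp_neg_dist[OF \<beta>'(2,1)])
    then show ?thesis using \<beta>'(4) by (simp add: mult.commute)
  qed
  have "AE x in \<alpha>. exp (- diameter X) * measure \<beta> UNIV \<le> potential \<beta> x"
    using AE_in_fin_measures_on[OF \<alpha> X(1)] by eventually_elim (rule pointwise)
  then have "(\<integral>x. exp (- diameter X) * measure \<beta> UNIV \<partial>\<alpha>) \<le> Zpair \<alpha> \<beta>"
    unfolding Zpair_eq_integral_potential
    by (intro integral_mono_AE finite_measure.integrable_const[OF \<alpha>'(2)]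
        integrable_potential[OF \<beta>'(2,1) \<alpha>'(2,1)])
  then show ?thesis using \<alpha>'(4) by (simp add: mult_ac)
qed

lemma Zpair_pos:
  assumes "compact X" "\<mu> \<in> prob_measures_on X"
  shows "0 < Zpair \<mu> \<mu>"
proof -
  have "exp (- diameter X) * measure \<mu> UNIV * measure \<mu> UNIV \<le> Zpair \<mu> \<mu>"
    using prob_measures_onD(1)[OF assms(2)] assms(1)
    by (intro Zpair_lower_bound borel_compact compact_imp_bounded)
  then show ?thesis
    using prob_measures_onD(2)[OF assms(2)] by (simp add: less_le_trans[OF exp_gt_zero])
qed

section \<open>Supports\<close>

lemma not_in_support_iff: "x \<notin> support \<mu> \<longleftrightarrow> (\<exists>U. open U \<and> x \<in> U \<and> emeasure \<mu> U = 0)"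
  by (auto simp: support_def not_less)

lemma closed_support: "closed (support \<mu>)"
proof -
  have "- support \<mu> = \<Union>{U. open U \<and> emeasure \<mu> U = 0}"
    by (auto simp: not_in_support_iff) (auto simp: support_def)
  moreover have "open (\<Union>{U. open U \<and> emeasure \<mu> U = 0})"
    by (rule open_Union) blast
  ultimately show ?thesis
    by (simp only: closed_def)
qed

lemma emeasure_compact_outside_support:
  assumes sets: "sets \<mu> = sets borel" and K: "compact K" "K \<inter> support \<mu> = {}"
  shows "emeasure \<mu> K = 0"
proof -
  have cover: "K \<subseteq> \<Union>{U. open U \<and> emeasure \<mu> U = 0}"
  proof
    fix x assume "x \<in> K"
    then have "x \<notin> support \<mu>" using K(2) by blast
    then show "x \<in> \<Union>{U. open U \<and> emeasure \<mu> U = 0}"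
      unfolding not_in_support_iff by blast
  qed
  have "open U" if "U \<in> {U. open U \<and> emeasure \<mu> U = 0}" for U
    using that by blast
  then obtain N where N: "N \<subseteq> {U. open U \<and> emeasure \<mu> U = 0}" "finite N" "K \<subseteq> \<Union>N"
    by (rule compactE[OF K(1) cover])
  have "N \<subseteq> null_sets \<mu>"
    using N(1) sets by (auto simp: null_sets_def borel_open)
  then have "\<Union>N \<in> null_sets \<mu>"
    using N(2) by (intro null_sets.finite_Union)
  then have "K \<in> null_sets \<mu>"
    using N(3) borel_compact[OF K(1)] sets by (auto intro: null_sets_subset)
  then show ?thesis by (rule null_setsD1)
qed

lemma compact_Int_far_from:
  fixes X S :: "'a::metric_space set"
  assumes "compact X"
  shows "compact (X \<inter> (\<Inter>s\<in>S. {x. r \<le> dist x s}))"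
proof -
  have "closed (\<Inter>s\<in>S. {x. r \<le> dist x s})"
    by (intro closed_INT ballI closed_Collect_le continuous_on_const continuous_on_dist continuous_on_id)
  then show ?thesis
    using assms by (intro compact_Int_closed)
qed

lemma diff_closed_subset_UN_far_from:
  fixes X S :: "'a::metric_space set"
  assumes "closed S"
  shows "X - S \<subseteq> (\<Union>n. X \<inter> (\<Inter>s\<in>S. {x. inverse (real (Suc n)) \<le> dist x s}))"
proof
  fix x assume x: "x \<in> X - S"
  have "open (- S)"
    using assms by (rule open_Compl)
  then obtain e where e: "0 < e" "ball x e \<subseteq> - S"
    using x by (auto simp: open_contains_ball)
  obtain n where "inverse (real (Suc n)) < e"
    using reals_Archimedean[OF e(1)] by blast
  moreover have "\<not> dist x s < e" if "s \<in> S" for s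
    using e(2) that by auto
  ultimately show "x \<in> (\<Union>n. X \<inter> (\<Inter>s\<in>S. {x. inverse (real (Suc n)) \<le> dist x s}))"
    using x by (auto simp: not_less intro: less_imp_le less_le_trans)
qed

lemma emeasure_compl_support:
  fixes X :: "'a::metric_space set"
  assumes X: "compact X" and \<mu>: "\<mu> \<in> fin_measures_on X"
  shows "emeasure \<mu> (UNIV - support \<mu>) = 0"
proof -
  note \<mu>' = fin_measures_onD[OF \<mu>]
  define K where "K n = X \<inter> (\<Inter>s\<in>support \<mu>. {x. inverse (real (Suc n)) \<le> dist x s})" for n
  have "K n \<inter> support \<mu> = {}" for n
  proof -
    have False if "x \<in> K n" "x \<in> support \<mu>" for x
    proof -
      have "inverse (real (Suc n)) \<le> dist x x"
        using that by (auto simp: K_def)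
      then show False by simp
    qed
    then show ?thesis by blast
  qed
  then have K_null: "K n \<in> null_sets \<mu>" for n
    using emeasure_compact_outside_support[OF \<mu>'(1)] compact_Int_far_from[OF X] \<mu>'(1)
    by (simp add: null_sets_def K_def borel_compact)
  have "UNIV - X \<in> null_sets \<mu>"
    using \<mu>' borel_compact[OF X] by (auto simp: null_sets_def)
  then have "(UNIV - X) \<union> (\<Union>n. K n) \<in> null_sets \<mu>"
    using null_sets_UN[of K, OF K_null] by (rule null_sets.Un)
  moreover have "UNIV - support \<mu> \<in> sets \<mu>"
    by (simp add: \<mu>'(1) Compl_eq_Diff_UNIV[symmetric] borel_open open_Compl closed_support)
  moreover have "UNIV - support \<mu> \<subseteq> (UNIV - X) \<union> (\<Union>n. K n)"
    using diff_closed_subset_UN_far_from[OF closed_support, of X \<mu>] by (auto simp: K_def)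
  ultimately have "UNIV - support \<mu> \<in> null_sets \<mu>"
    by (rule null_sets_subset)
  then show ?thesis by (rule null_setsD1)
qed

lemma prob_measures_on_support:
  assumes "compact X" "\<mu> \<in> prob_measures_on X"
  shows "\<mu> \<in> prob_measures_on (support \<mu>)"
  using assms emeasure_compl_support[OF assms(1) prob_measures_onD(1)[OF assms(2)]]
  by (auto simp: prob_measures_on_def fin_measures_on_def)

lemma support_subset:
  assumes "\<mu> \<in> fin_measures_on X" "closed X"
  shows "support \<mu> \<subseteq> X"
proof
  fix x assume x: "x \<in> support \<mu>"
  show "x \<in> X"
  proof (rule ccontr)
    assume "x \<notin> X"
    then have "0 < emeasure \<mu> (UNIV - X)"
      using x assms(2) by (auto simp: support_def Compl_eq_Diff_UNIV[symmetric] open_Compl)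
    then show False
      using fin_measures_onD(3)[OF assms(1)] by simp
  qed
qed

section \<open>Diversity-maximizing measures\<close>

text \<open>The convex combination t M + (1 - t) N, for 0 \<le> t \<le> 1.\<close>

definition mixture :: "real \<Rightarrow> 'a measure \<Rightarrow> 'a measure \<Rightarrow> 'a measure" where
  "mixture t M N = measure_pmf (bernoulli_pmf t) \<bind> (\<lambda>b. if b then M else N)"

lemma mixture_kernel_measurable:
  assumes "M \<in> prob_measures_on Y" "N \<in> prob_measures_on Y"
  shows "(\<lambda>b. if b then M else N) \<in> measure_pmf p \<rightarrow>\<^sub>M subprob_algebra borel"
  using prob_measures_onD(3)[OF assms(1)] prob_measures_onD(3)[OF assms(2)]
    fin_measures_onD(1)[OF prob_measures_onD(1)[OF assms(1)]]
    fin_measures_onD(1)[OF prob_measures_onD(1)[OF assms(2)]]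
  by (auto simp: space_subprob_algebra split: if_splits intro: prob_space_imp_subprob_space)

lemma mixture_in_prob_measures_on:
  assumes M: "M \<in> prob_measures_on Y" and N: "N \<in> prob_measures_on Y"
  shows "mixture t M N \<in> prob_measures_on Y"
proof -
  note kernel = mixture_kernel_measurable[OF M N, of "bernoulli_pmf t"]
  note M' = fin_measures_onD[OF prob_measures_onD(1)[OF M]]
    and N' = fin_measures_onD[OF prob_measures_onD(1)[OF N]]
  have sets: "sets (mixture t M N) = sets borel"
    unfolding mixture_def using M'(1) N'(1) by (intro sets_bind) auto
  have prob: "prob_space (mixture t M N)"
    unfolding mixture_def
    using prob_measures_onD(3)[OF M] prob_measures_onD(3)[OF N]
    by (intro prob_space.prob_space_bind[OF prob_space_measure_pmf _ kernel]) auto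
  have "emeasure (mixture t M N) (UNIV - Y) = 0"
  proof (cases "UNIV - Y \<in> sets borel")
    case True
    then have "emeasure (mixture t M N) (UNIV - Y)
        = (\<integral>\<^sup>+b. emeasure (if b then M else N) (UNIV - Y) \<partial>measure_pmf (bernoulli_pmf t))"
      unfolding mixture_def by (intro emeasure_bind[OF _ kernel]) auto
    also have "\<dots> = 0"
    proof -
      have "emeasure (if b then M else N) (UNIV - Y) = 0" for b
        using M'(3) N'(3) by simp
      then show ?thesis by simp
    qed
    finally show ?thesis .
  next
    case False
    then show ?thesis using sets by (simp add: emeasure_notin_sets)
  qed
  moreover have "space (mixture t M N) = UNIV"
    using sets_eq_imp_space_eq[OF sets] by simp
  ultimately show ?thesis
    using prob sets prob_space.emeasure_space_1[OF prob] prob_space.finite_measure[OF prob]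
    by (simp add: prob_measures_on_def fin_measures_on_def)
qed

lemma integral_mixture:
  fixes g :: "'a::metric_space \<Rightarrow> real"
  assumes t: "0 \<le> t" "t \<le> 1" and M: "M \<in> prob_measures_on Y" and N: "N \<in> prob_measures_on Y"
    and g: "g \<in> borel_measurable borel" "\<And>x. \<bar>g x\<bar> \<le> B"
  shows "(\<integral>x. g x \<partial>mixture t M N) = t * (\<integral>x. g x \<partial>M) + (1 - t) * (\<integral>x. g x \<partial>N)"
proof -
  have "(\<integral>x. g x \<partial>mixture t M N)
      = (\<integral>b. (\<integral>x. g x \<partial>(if b then M else N)) \<partial>measure_pmf (bernoulli_pmf t))"
    unfolding mixture_def
  proof (rule integral_bind[where B'=1])
    show "AE b in measure_pmf (bernoulli_pmf t). emeasure (if b then M else N) (space (if b then M else N)) \<le> ennreal 1"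
      using prob_space.emeasure_space_1[OF prob_measures_onD(3)[OF M]]
        prob_space.emeasure_space_1[OF prob_measures_onD(3)[OF N]] by simp
  qed (use g mixture_kernel_measurable[OF M N] prob_space.finite_measure[OF prob_space_measure_pmf] in auto)
  also have "\<dots> = t * (\<integral>x. g x \<partial>M) + (1 - t) * (\<integral>x. g x \<partial>N)"
    using t by (simp add: mult.commute)
  finally show ?thesis .
qed

lemma return_in_prob_measures_on:
  assumes "x \<in> Y"
  shows "return borel x \<in> prob_measures_on Y"
proof -
  have "emeasure (return borel x) (UNIV - Y) = 0"
    using assms by (cases "UNIV - Y \<in> sets borel") (auto simp: emeasure_notin_sets)
  then show ?thesis
    using prob_space_return[of x borel] prob_space.finite_measure[OF prob_space_return[of x borel]]
    by (simp add: prob_measures_on_def fin_measures_on_def prob_space.emeasure_space_1)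
qed

lemma Zpair_mixture_return:
  assumes t: "0 \<le> t" "t \<le> 1" and \<mu>: "\<mu> \<in> prob_measures_on Y" and x: "x \<in> Y"
  defines "\<nu> \<equiv> mixture t (return borel x) \<mu>"
  shows "Zpair \<nu> \<nu> = t\<^sup>2 + 2 * t * (1 - t) * potential \<mu> x + (1 - t)\<^sup>2 * Zpair \<mu> \<mu>"
proof -
  note \<delta>x = return_in_prob_measures_on[OF x]
  note \<mu>' = fin_measures_onD[OF prob_measures_onD(1)[OF \<mu>]]
  have \<nu>: "\<nu> \<in> prob_measures_on Y"
    unfolding \<nu>_def by (rule mixture_in_prob_measures_on[OF \<delta>x \<mu>])
  note \<nu>' = fin_measures_onD[OF prob_measures_onD(1)[OF \<nu>]]
  have potential_\<nu>: "potential \<nu> y = t * exp (- dist y x) + (1 - t) * potential \<mu> y" for y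
    unfolding \<nu>_def potential_def
    by (subst integral_mixture[OF t \<delta>x \<mu>, where B=1]) (simp_all add: integral_return)
  have bound: "\<bar>potential \<nu> y\<bar> \<le> measure \<nu> UNIV" for y
    using potential_nonneg[OF \<nu>'(2,1)] potential_le[OF \<nu>'(2,1)] by simp
  have "Zpair \<nu> \<nu> = t * potential \<nu> x + (1 - t) * (\<integral>y. potential \<nu> y \<partial>\<mu>)"
    using integral_mixture[OF t \<delta>x \<mu> borel_measurable_potential[OF \<nu>'(2,1)] bound]
    by (simp add: Zpair_eq_integral_potential \<nu>_def[symmetric] integral_return
        borel_measurable_potential[OF \<nu>'(2,1)])
  also have "potential \<nu> x = t + (1 - t) * potential \<mu> x"
    by (simp add: potential_\<nu>)
  also have "(\<integral>y. potential \<nu> y \<partial>\<mu>) = t * potential \<mu> x + (1 - t) * Zpair \<mu> \<mu>"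
  proof -
    have "integrable \<mu> (\<lambda>y. exp (- dist y x))"
      using integrable_exp_neg_dist[OF \<mu>'(2,1), of x] by (simp add: dist_commute)
    moreover have "(\<integral>y. exp (- dist y x) \<partial>\<mu>) = potential \<mu> x"
      by (simp add: potential_def dist_commute)
    ultimately show ?thesis
      unfolding potential_\<nu> Zpair_eq_integral_potential
      using integrable_potential[OF \<mu>'(2,1) \<mu>'(2,1)] by simp
  qed
  finally show ?thesis
    by (simp add: power2_eq_square algebra_simps)
qed

lemma diversity_maximizing_Zpair_le:
  assumes X: "compact X" and dm: "diversity_maximizing X \<mu>" and \<nu>: "\<nu> \<in> prob_measures_on X"
  shows "Zpair \<mu> \<mu> \<le> Zpair \<nu> \<nu>"
proof -
  have \<mu>: "\<mu> \<in> prob_measures_on X" and max: "max_diversity X = ereal (1 / Zpair \<mu> \<mu>)"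
    using dm unfolding diversity_maximizing_def by auto
  have "ereal (1 / Zpair \<nu> \<nu>) \<le> max_diversity X"
    unfolding max_diversity_def by (rule Sup_upper) (use \<nu> in blast)
  then have "1 / Zpair \<nu> \<nu> \<le> 1 / Zpair \<mu> \<mu>"
    using max by simp
  then show ?thesis
    using Zpair_pos[OF X \<mu>] Zpair_pos[OF X \<nu>] by (simp add: field_simps)
qed

lemma Zpair_le_potential:
  assumes X: "compact X" and dm: "diversity_maximizing X \<mu>" and x: "x \<in> X"
  shows "Zpair \<mu> \<mu> \<le> potential \<mu> x"
proof (rule ccontr)
  define c where "c = Zpair \<mu> \<mu>"
  define a where "a = potential \<mu> x"
  assume "\<not> Zpair \<mu> \<mu> \<le> potential \<mu> x"
  then have "a < c" by (simp add: a_def c_def)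
  have \<mu>: "\<mu> \<in> prob_measures_on X"
    using dm by (simp add: diversity_maximizing_def)
  have "0 < c" unfolding c_def by (rule Zpair_pos[OF X \<mu>])
  have "0 \<le> a"
    unfolding a_def using fin_measures_onD[OF prob_measures_onD(1)[OF \<mu>]] by (intro potential_nonneg)
  \<comment> \<open>This t makes the first-order gain 2 t (c - a) of moving mass t to x exceed the second-order cost.\<close>
  define t where "t = (c - a) / (c + 1)"
  have t: "0 < t" "t \<le> 1" "c - a = t * (c + 1)"
    using \<open>a < c\<close> \<open>0 < c\<close> \<open>0 \<le> a\<close> by (auto simp: t_def field_simps)
  have "c \<le> Zpair (mixture t (return borel x) \<mu>) (mixture t (return borel x) \<mu>)"
    unfolding c_def
    by (intro diversity_maximizing_Zpair_le[OF X dm] mixture_in_prob_measures_on return_in_prob_measures_on x \<mu>)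
  also have "\<dots> = t\<^sup>2 + 2 * t * (1 - t) * a + (1 - t)\<^sup>2 * c"
    unfolding a_def c_def using t by (intro Zpair_mixture_return[OF _ _ \<mu> x]) auto
  also have "\<dots> = c + t * (t * (c - 2 * a + 1) - 2 * (c - a))"
    by (simp add: power2_eq_square algebra_simps)
  also have "\<dots> = c - t\<^sup>2 * (c + 2 * a + 1)"
    unfolding t(3) by (simp add: power2_eq_square algebra_simps)
  also have "\<dots> < c"
    using t(1) \<open>0 < c\<close> \<open>0 \<le> a\<close> by simp
  finally show False by simp
qed

lemma AE_le_imp_le_on_support:
  fixes f :: "'a::metric_space \<Rightarrow> real"
  assumes sets: "sets \<mu> = sets borel" and f: "continuous_on UNIV f"
    and le: "AE y in \<mu>. f y \<le> c" and x: "x \<in> support \<mu>"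
  shows "f x \<le> c"
proof (rule ccontr)
  assume "\<not> f x \<le> c"
  have "open {y. c < f y}"
    using f by (intro open_Collect_less) auto
  moreover have "(AE y in \<mu>. f y \<le> c) \<longleftrightarrow> emeasure \<mu> {y. c < f y} = 0"
    using \<open>open {y. c < f y}\<close> sets sets_eq_imp_space_eq[OF sets]
    by (intro AE_iff_measurable) (auto simp: borel_open)
  ultimately show False
    using le x \<open>\<not> f x \<le> c\<close> by (auto simp: support_def)
qed

lemma potential_eq_Zpair_on_support:
  assumes X: "compact X" and dm: "diversity_maximizing X \<mu>" and x: "x \<in> support \<mu>"
  shows "potential \<mu> x = Zpair \<mu> \<mu>"
proof (rule antisym)
  define c where "c = Zpair \<mu> \<mu>"
  have \<mu>: "\<mu> \<in> prob_measures_on X"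
    using dm by (simp add: diversity_maximizing_def)
  note \<mu>' = fin_measures_onD[OF prob_measures_onD(1)[OF \<mu>]]
  \<comment> \<open>The potential is at least c on X and averages to c, so it equals c almost everywhere.\<close>
  have integrable: "integrable \<mu> (\<lambda>y. potential \<mu> y - c)"
    by (rule Bochner_Integration.integrable_diff[OF integrable_potential[OF \<mu>'(2,1) \<mu>'(2,1)]
          finite_measure.integrable_const[OF \<mu>'(2)]])
  have "(\<integral>y. potential \<mu> y - c \<partial>\<mu>) = 0"
    using integrable_potential[OF \<mu>'(2,1) \<mu>'(2,1)] prob_measures_onD(2)[OF \<mu>] \<mu>'(4)
    by (simp add: Zpair_eq_integral_potential c_def finite_measure.integrable_const[OF \<mu>'(2)])
  moreover have "AE y in \<mu>. 0 \<le> potential \<mu> y - c"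
    using AE_in_fin_measures_on[OF prob_measures_onD(1)[OF \<mu>] borel_compact[OF X]]
    by eventually_elim (use Zpair_le_potential[OF X dm] in \<open>simp add: c_def\<close>)
  ultimately have "AE y in \<mu>. potential \<mu> y \<le> c"
    using integral_nonneg_eq_0_iff_AE[OF integrable] by auto
  then show "potential \<mu> x \<le> Zpair \<mu> \<mu>"
    unfolding c_def by (rule AE_le_imp_le_on_support[OF \<mu>'(1) continuous_potential[OF \<mu>'(2,1)] _ x])
  show "Zpair \<mu> \<mu> \<le> potential \<mu> x"
    using support_subset[OF prob_measures_onD(1)[OF \<mu>] compact_imp_closed[OF X]] x
    by (intro Zpair_le_potential[OF X dm]) blast
qed

lemma Zpair_measure_on_support:
  assumes X: "compact X" and dm: "diversity_maximizing X \<mu>" and \<beta>: "\<beta> \<in> fin_measures_on (support \<mu>)"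
  shows "Zpair \<beta> \<mu> = Zpair \<mu> \<mu> * measure \<beta> UNIV" "Zpair \<mu> \<beta> = Zpair \<mu> \<mu> * measure \<beta> UNIV"
proof -
  have \<mu>: "\<mu> \<in> fin_measures_on X"
    using dm by (simp add: diversity_maximizing_def prob_measures_on_def)
  note \<mu>' = fin_measures_onD[OF \<mu>] and \<beta>' = fin_measures_onD[OF \<beta>]
  have "Zpair \<beta> \<mu> = (\<integral>y. Zpair \<mu> \<mu> \<partial>\<beta>)"
    unfolding Zpair_eq_integral_potential[of \<beta>]
  proof (rule integral_cong_AE)
    show "AE y in \<beta>. potential \<mu> y = Zpair \<mu> \<mu>"
      using AE_in_fin_measures_on[OF \<beta> borel_closed[OF closed_support]]
      by eventually_elim (rule potential_eq_Zpair_on_support[OF X dm])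
  qed (use borel_measurable_potential[OF \<mu>'(2,1)] measurable_sets_borel[OF \<beta>'(1)] in auto)
  then show "Zpair \<beta> \<mu> = Zpair \<mu> \<mu> * measure \<beta> UNIV"
    using \<beta>'(4) by simp
  moreover have "\<beta> \<in> fin_measures_on X"
    using \<beta> fin_measures_on_mono[OF support_subset[OF \<mu> compact_imp_closed[OF X]]
        borel_closed[OF closed_support]] by blast
  ultimately show "Zpair \<mu> \<beta> = Zpair \<mu> \<mu> * measure \<beta> UNIV"
    using Zpair_commute[OF X \<mu>] by simp
qed

lemma Zpair_le_Winner:
  fixes X :: "'a::metric_space set"
  assumes X: "compact X" and neg: "negative_type TYPE('h::{real_inner,complete_space}) X"
    and dm: "diversity_maximizing X \<mu>"
    and m: "fst m \<in> fin_measures_on (support \<mu>)" "snd m \<in> fin_measures_on (support \<mu>)"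
    and mass: "total_mass m = 1"
  shows "Zpair \<mu> \<mu> \<le> Winner m m"
proof -
  have \<mu>: "\<mu> \<in> fin_measures_on X"
    using dm by (simp add: diversity_maximizing_def prob_measures_on_def)
  have "fin_measures_on (support \<mu>) \<subseteq> fin_measures_on X"
    using support_subset[OF \<mu> compact_imp_closed[OF X]]
    by (intro fin_measures_on_mono borel_closed closed_support)
  \<comment> \<open>Expand the nonnegative energy of the signed measure m - \<mu>.\<close>
  define \<alpha> where "\<alpha> q = (if q = (0::nat) then fst m else if q = 1 then snd m else \<mu>)" for q
  define w where "w q = (if q = (0::nat) then 1 else - 1 :: real)" for q
  have "0 \<le> (\<Sum>q\<in>{0,1,2}. \<Sum>r\<in>{0,1,2}. w q * w r * Zpair (\<alpha> q) (\<alpha> r))"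
    using m \<mu> \<open>fin_measures_on (support \<mu>) \<subseteq> fin_measures_on X\<close>
    by (intro Zpair_psd[OF X neg]) (auto simp: \<alpha>_def)
  also have "\<dots> = Winner m m - Zpair (fst m) \<mu> - Zpair \<mu> (fst m) + Zpair (snd m) \<mu> + Zpair \<mu> (snd m)
      + Zpair \<mu> \<mu>"
    by (simp add: \<alpha>_def w_def Winner_def)
  also have "\<dots> = Winner m m - 2 * Zpair \<mu> \<mu> * total_mass m + Zpair \<mu> \<mu>"
    using Zpair_measure_on_support[OF X dm m(1)] Zpair_measure_on_support[OF X dm m(2)]
    by (simp add: total_mass_def algebra_simps)
  finally show ?thesis
    using mass by simp
qed

lemma magnitude_support:
  fixes X :: "'a::metric_space set"
  assumes X: "compact X" and neg: "negative_type TYPE('h::{real_inner,complete_space}) X"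
    and dm: "diversity_maximizing X \<mu>"
  shows "magnitude (support \<mu>) = ereal (1 / Zpair \<mu> \<mu>)"
proof -
  have \<mu>: "\<mu> \<in> prob_measures_on X"
    using dm by (simp add: diversity_maximizing_def)
  have "0 < Zpair \<mu> \<mu>" by (rule Zpair_pos[OF X \<mu>])
  have \<mu>S: "\<mu> \<in> prob_measures_on (support \<mu>)"
    by (rule prob_measures_on_support[OF X \<mu>])
  have "null_measure borel \<in> fin_measures_on (support \<mu>)"
    by (simp add: fin_measures_on_def finite_measureI)
  moreover have "Winner (\<mu>, null_measure borel) (\<mu>, null_measure borel) = Zpair \<mu> \<mu>"
    by (simp add: Winner_def Zpair_def)
  moreover have "total_mass (\<mu>, null_measure borel) = 1"
    using prob_measures_onD(2)[OF \<mu>] by (simp add: total_mass_def)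
  ultimately have "ereal (1 / Zpair \<mu> \<mu>) \<le> magnitude (support \<mu>)"
    unfolding magnitude_def using prob_measures_onD(1)[OF \<mu>S]
    by (intro Sup_upper CollectI exI[of _ "(\<mu>, null_measure borel)"]) auto
  moreover have "magnitude (support \<mu>) \<le> ereal (1 / Zpair \<mu> \<mu>)"
    unfolding magnitude_def
  proof (rule Sup_least)
    fix z assume "z \<in> {ereal (1 / Winner m m) |m. fst m \<in> fin_measures_on (support \<mu>)
                        \<and> snd m \<in> fin_measures_on (support \<mu>) \<and> total_mass m = 1}"
    then obtain m where z: "z = ereal (1 / Winner m m)" and m: "fst m \<in> fin_measures_on (support \<mu>)"
      "snd m \<in> fin_measures_on (support \<mu>)" "total_mass m = 1"
      by blast
    have "Zpair \<mu> \<mu> \<le> Winner m m"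
      by (rule Zpair_le_Winner[OF X neg dm m])
    then show "z \<le> ereal (1 / Zpair \<mu> \<mu>)"
      using \<open>0 < Zpair \<mu> \<mu>\<close> z by (simp add: frac_le)
  qed
  ultimately show ?thesis by (rule antisym[rotated])
qed

section \<open>Approximation by finite subspaces\<close>

definition prob_weights :: "'a set \<Rightarrow> ('a \<Rightarrow> real) set" where
  "prob_weights F = {w. (\<forall>x. w x \<in> (if x \<in> F then {0..1} else {0})) \<and> sum w F = 1}"

lemma compact_prob_weights: "compact (prob_weights F)"
proof -
  define T where "T x = (if x \<in> F then {0..1::real} else {0})" for x
  have "compactin (product_topology (\<lambda>_. euclidean) UNIV) (PiE UNIV T)"
    by (subst compactin_PiE) (auto simp: T_def)
  then have "compact (PiE UNIV T)"
    by (simp add: euclidean_product_topology)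
  moreover have "closed {w :: 'a \<Rightarrow> real. sum w F = 1}"
    by (intro closed_Collect_eq continuous_on_sum continuous_on_const)
       (auto intro: continuous_on_product_coordinates)
  moreover have "PiE UNIV T = {w. \<forall>x. w x \<in> T x}"
    by (auto simp: PiE_UNIV_domain Pi_iff)
  ultimately have "compact {w. (\<forall>x. w x \<in> T x) \<and> sum w F = 1}"
    using compact_Int_closed by (simp add: Collect_conj_eq)
  then show ?thesis
    by (simp only: T_def prob_weights_def)
qed

lemma fin_measures_on_measure_eq:
  assumes "\<mu> \<in> fin_measures_on Y" "Y \<in> sets borel"
  shows "measure \<mu> Y = measure \<mu> UNIV"
proof -
  note \<mu>' = fin_measures_onD[OF assms(1)]
  have "UNIV - Y \<in> null_sets \<mu>"
    using \<mu>' assms(2) by (auto simp: null_sets_def)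
  then have "measure \<mu> (Y \<union> (UNIV - Y)) = measure \<mu> Y"
    using \<mu>'(1) assms(2) by (intro measure_Un_null_set) auto
  then show ?thesis by simp
qed

lemma singleton_measures_in_prob_weights:
  assumes F: "finite F" and \<nu>: "\<nu> \<in> prob_measures_on F"
  shows "(\<lambda>x. measure \<nu> {x}) \<in> prob_weights F"
proof -
  note \<nu>' = fin_measures_onD[OF prob_measures_onD(1)[OF \<nu>]]
  have FB: "F \<in> sets borel"
    using F by (simp add: finite_imp_closed borel_closed)
  have "(\<Sum>x\<in>F. measure \<nu> {x}) = measure \<nu> F"
    using F \<nu>'(1) finite_measure.emeasure_finite[OF \<nu>'(2)]
    by (intro measure_eq_sum_singleton[symmetric]) auto
  also have "\<dots> = 1"
    using fin_measures_on_measure_eq[OF prob_measures_onD(1)[OF \<nu>] FB] prob_measures_onD(2)[OF \<nu>] by simp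
  finally have "(\<Sum>x\<in>F. measure \<nu> {x}) = 1" .
  moreover have "measure \<nu> {x} = 0" if "x \<notin> F" for x
  proof -
    have "measure \<nu> {x} \<le> measure \<nu> (UNIV - F)"
      using that FB \<nu>'(1) by (intro finite_measure.finite_measure_mono[OF \<nu>'(2)]) auto
    moreover have "measure \<nu> (UNIV - F) = 0"
      using \<nu>'(3) by (simp add: measure_def)
    ultimately show ?thesis
      using measure_nonneg[of \<nu> "{x}"] by linarith
  qed
  moreover have "measure \<nu> {x} \<le> 1" for x
    using finite_measure.bounded_measure[OF \<nu>'(2)] prob_measures_onD(2)[OF \<nu>] \<nu>'(4) by metis
  ultimately show ?thesis
    by (auto simp: prob_weights_def)
qed

lemma prob_measure_of_weights:
  fixes F :: "'a::metric_space set"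
  assumes F: "finite F" and w: "w \<in> prob_weights F"
  defines "\<mu> \<equiv> distr (point_measure F (\<lambda>x. ennreal (w x))) borel id"
  shows "\<mu> \<in> prob_measures_on F" "(\<lambda>x. measure \<mu> {x}) = w"
proof -
  have w_nonneg: "\<And>x. 0 \<le> w x" and w_out: "\<And>x. x \<notin> F \<Longrightarrow> w x = 0" and w_sum: "sum w F = 1"
    using w by (auto simp: prob_weights_def split: if_splits)
  have emeasure_\<mu>: "emeasure \<mu> A = (\<Sum>x\<in>A \<inter> F. ennreal (w x))" if "A \<in> sets borel" for A
    using that F unfolding \<mu>_def
    by (simp add: emeasure_distr space_point_measure emeasure_point_measure_finite)
  have "emeasure \<mu> UNIV = 1"
    using w_nonneg w_sum by (simp add: emeasure_\<mu> sum_ennreal)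
  moreover have "emeasure \<mu> (UNIV - F) = 0"
    using F by (simp add: emeasure_\<mu> finite_imp_closed borel_closed Diff_Int_distrib2)
  ultimately show "\<mu> \<in> prob_measures_on F"
    by (simp add: prob_measures_on_def fin_measures_on_def \<mu>_def finite_measureI)
  show "(\<lambda>x. measure \<mu> {x}) = w"
  proof
    fix x
    show "measure \<mu> {x} = w x"
      using w_nonneg w_out by (cases "x \<in> F") (simp_all add: measure_def emeasure_\<mu>)
  qed
qed

lemma diversity_maximizingI:
  assumes X: "compact X" and \<mu>: "\<mu> \<in> prob_measures_on X"
    and min: "\<And>\<nu>. \<nu> \<in> prob_measures_on X \<Longrightarrow> Zpair \<mu> \<mu> \<le> Zpair \<nu> \<nu>"
  shows "diversity_maximizing X \<mu>"
proof -
  have "max_diversity X \<le> ereal (1 / Zpair \<mu> \<mu>)"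
    unfolding max_diversity_def
  proof (rule Sup_least)
    fix z assume "z \<in> {ereal (1 / Zpair \<nu> \<nu>) |\<nu>. \<nu> \<in> prob_measures_on X}"
    then obtain \<nu> where "z = ereal (1 / Zpair \<nu> \<nu>)" "\<nu> \<in> prob_measures_on X" by blast
    then show "z \<le> ereal (1 / Zpair \<mu> \<mu>)"
      using min Zpair_pos[OF X \<mu>] by (simp add: frac_le)
  qed
  moreover have "ereal (1 / Zpair \<mu> \<mu>) \<le> max_diversity X"
    unfolding max_diversity_def by (rule Sup_upper) (use \<mu> in blast)
  ultimately show ?thesis
    using \<mu> by (simp add: diversity_maximizing_def)
qed

lemma finite_diversity_maximizer_exists:
  fixes F :: "'a::metric_space set"
  assumes F: "finite F" "F \<noteq> {}"
  obtains \<mu> where "diversity_maximizing F \<mu>"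
proof -
  define E where "E w = (\<Sum>x\<in>F. \<Sum>y\<in>F. w x * w y * exp (- dist x y))" for w :: "'a \<Rightarrow> real"
  have Zpair_eq: "Zpair \<nu> \<nu> = E (\<lambda>x. measure \<nu> {x})" if "\<nu> \<in> prob_measures_on F" for \<nu>
    using Zpair_finite_support[OF F(1) prob_measures_onD(1)[OF that] prob_measures_onD(1)[OF that]]
    by (simp add: E_def)
  obtain x0 where "x0 \<in> F" using F(2) by blast
  then have "indicator {x0} \<in> prob_weights F"
    using F(1) by (auto simp: prob_weights_def indicator_def)
  moreover have "continuous_on (prob_weights F) E"
    unfolding E_def
    by (intro continuous_on_sum continuous_on_mult continuous_on_const)
       (auto intro: continuous_on_subset[OF continuous_on_product_coordinates])
  ultimately obtain w where w: "w \<in> prob_weights F" and w_min: "\<And>v. v \<in> prob_weights F \<Longrightarrow> E w \<le> E v"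
    using continuous_attains_inf[OF compact_prob_weights] by blast
  define \<mu> where "\<mu> = distr (point_measure F (\<lambda>x. ennreal (w x))) borel id"
  have \<mu>: "\<mu> \<in> prob_measures_on F" "(\<lambda>x. measure \<mu> {x}) = w"
    unfolding \<mu>_def using prob_measure_of_weights[OF F(1) w] by simp_all
  have "Zpair \<mu> \<mu> \<le> Zpair \<nu> \<nu>" if "\<nu> \<in> prob_measures_on F" for \<nu>
    using w_min[OF singleton_measures_in_prob_weights[OF F(1) that]] Zpair_eq[OF that] Zpair_eq[OF \<mu>(1)] \<mu>(2)
    by simp
  then have "diversity_maximizing F \<mu>"
    by (rule diversity_maximizingI[OF finite_imp_compact[OF F(1)] \<mu>(1)])
  then show thesis by (rule that)
qed

lemma finite_energy_approximation:
  assumes X: "compact X" and \<mu>: "\<mu> \<in> prob_measures_on X" and \<epsilon>: "0 < \<epsilon>"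
  obtains F \<nu> where "finite F" "F \<subseteq> X" "\<nu> \<in> prob_measures_on F" "Zpair \<nu> \<nu> \<le> Zpair \<mu> \<mu> + \<epsilon>"
proof -
  obtain F Q where F: "finite F" "F \<subseteq> X" and Q: "Q \<in> borel \<rightarrow>\<^sub>M borel"
    "\<And>x. x \<in> X \<Longrightarrow> Q x \<in> F" "\<And>x. x \<in> X \<Longrightarrow> dist x (Q x) < \<epsilon> / 2"
    using quantizer_exists[OF X half_gt_zero[OF \<epsilon>]] by blast
  have FB: "F \<in> sets borel"
    using F(1) by (simp add: finite_imp_compact borel_compact)
  have "distr \<mu> borel Q \<in> prob_measures_on F"
    by (rule distr_in_prob_measures_on[OF \<mu> borel_compact[OF X] FB Q(1,2)])
  moreover have "\<bar>Zpair \<mu> \<mu> - Zpair (distr \<mu> borel Q) (distr \<mu> borel Q)\<bar> \<le> 2 * (\<epsilon> / 2) * 1 * 1"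
    using Zpair_distr_diff_le[OF prob_measures_onD(1)[OF \<mu>] prob_measures_onD(1)[OF \<mu>]
        borel_compact[OF X] Q(1), of "\<epsilon> / 2"] Q(3) prob_measures_onD(2)[OF \<mu>]
    by (simp add: less_imp_le)
  ultimately show thesis
    using that[OF F] by simp
qed

lemma inverse_perturbation_le:
  fixes c e :: real
  assumes "0 < c" "0 < e"
  shows "1 / c \<le> 1 / (c + e * c\<^sup>2) + e"
proof -
  have q: "0 < c + e * c\<^sup>2"
    using assms by (simp add: add_pos_pos)
  have "(1 / c - e) * (c + e * c\<^sup>2) = 1 - (e * c)\<^sup>2"
    using assms by (simp add: field_simps power2_eq_square)
  also have "\<dots> \<le> 1" by simp
  finally have "1 / c - e \<le> 1 / (c + e * c\<^sup>2)"
    by (simp add: pos_le_divide_eq[OF q])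
  then show ?thesis by simp
qed

lemma Sup_magnitude_le_max_diversity:
  assumes "closed X"
  shows "Sup {magnitude Y | Y. closed Y \<and> Y \<subseteq> X \<and> positively_weighted Y} \<le> max_diversity X"
proof (rule Sup_least)
  fix z assume "z \<in> {magnitude Y | Y. closed Y \<and> Y \<subseteq> X \<and> positively_weighted Y}"
  then obtain Y \<mu> where Y: "closed Y" "Y \<subseteq> X" and z: "z = ereal (1 / Zpair \<mu> \<mu>)"
    and \<mu>: "\<mu> \<in> prob_measures_on Y"
    unfolding positively_weighted_def by blast
  have "\<mu> \<in> prob_measures_on X"
    using \<mu> prob_measures_on_mono[OF Y(2) borel_closed[OF Y(1)]] by blast
  then show "z \<le> max_diversity X"
    unfolding z max_diversity_def by (intro Sup_upper) blast
qed

lemma support_of_diversity_maximizing: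
  fixes X :: "'a::metric_space set"
  assumes X: "compact X" and neg: "negative_type TYPE('h::{real_inner,complete_space}) X"
    and dm: "diversity_maximizing X \<mu>"
  shows "closed (support \<mu>)" "support \<mu> \<subseteq> X" "positively_weighted (support \<mu>)"
    "magnitude (support \<mu>) = max_diversity X"
proof -
  have \<mu>: "\<mu> \<in> prob_measures_on X"
    using dm by (simp add: diversity_maximizing_def)
  show "closed (support \<mu>)"
    by (rule closed_support)
  show "support \<mu> \<subseteq> X"
    by (rule support_subset[OF prob_measures_onD(1)[OF \<mu>] compact_imp_closed[OF X]])
  show "positively_weighted (support \<mu>)"
    unfolding positively_weighted_def
    using prob_measures_on_support[OF X \<mu>] magnitude_support[OF X neg dm] by blast
  show "magnitude (support \<mu>) = max_diversity X"
    using magnitude_support[OF X neg dm] dm by (simp add: diversity_maximizing_def)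
qed

lemma max_diversity_le_Sup_magnitude:
  fixes X :: "'a::metric_space set"
  assumes X: "compact X" and neg: "negative_type TYPE('h::{real_inner,complete_space}) X"
  shows "max_diversity X \<le> Sup {magnitude Y | Y. closed Y \<and> Y \<subseteq> X \<and> positively_weighted Y}"
    (is "_ \<le> ?S")
  unfolding max_diversity_def
proof (rule Sup_least)
  fix z assume "z \<in> {ereal (1 / Zpair \<mu> \<mu>) |\<mu>. \<mu> \<in> prob_measures_on X}"
  then obtain \<mu> where z: "z = ereal (1 / Zpair \<mu> \<mu>)" and \<mu>: "\<mu> \<in> prob_measures_on X"
    by blast
  define c where "c = Zpair \<mu> \<mu>"
  have "0 < c" unfolding c_def by (rule Zpair_pos[OF X \<mu>])
  have "ereal (1 / c) \<le> ?S + ereal e" if "0 < e" for e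
  proof -
    obtain F \<nu> where F: "finite F" "F \<subseteq> X" and \<nu>: "\<nu> \<in> prob_measures_on F"
      and close: "Zpair \<nu> \<nu> \<le> c + e * c\<^sup>2"
      using finite_energy_approximation[OF X \<mu>, of "e * c\<^sup>2"] \<open>0 < c\<close> \<open>0 < e\<close> by (auto simp: c_def)
    have "F \<noteq> {}"
      using prob_measures_onD(2)[OF \<nu>] fin_measures_onD(3)[OF prob_measures_onD(1)[OF \<nu>]]
      by (auto simp: measure_def)
    then obtain \<mu>F where \<mu>F: "diversity_maximizing F \<mu>F"
      using finite_diversity_maximizer_exists[OF F(1)] by blast
    note support_F = support_of_diversity_maximizing[OF finite_imp_compact[OF F(1)]
        negative_type_subset[OF neg F(2)] \<mu>F]
    have "1 / (c + e * c\<^sup>2) \<le> 1 / Zpair \<nu> \<nu>"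
      using close Zpair_pos[OF finite_imp_compact[OF F(1)] \<nu>] by (intro divide_left_mono) auto
    then have "ereal (1 / c) \<le> ereal (1 / Zpair \<nu> \<nu>) + ereal e"
      using inverse_perturbation_le[OF \<open>0 < c\<close> \<open>0 < e\<close>] by simp
    moreover have "ereal (1 / Zpair \<nu> \<nu>) \<le> max_diversity F"
      unfolding max_diversity_def by (rule Sup_upper) (use \<nu> in blast)
    moreover have "max_diversity F \<le> ?S"
      using support_F F(2) by (intro Sup_upper) (auto intro!: exI[of _ "support \<mu>F"])
    ultimately show ?thesis
      by (meson add_mono order_refl order_trans)
  qed
  then show "z \<le> ?S"
    unfolding z c_def[symmetric] by (rule ereal_le_epsilon2)
qed

theorem theorem2p5:
  fixes X :: "'a::metric_space set"
  assumes "compact X"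
    and "negative_type TYPE('h::{real_inner,complete_space}) X"
  shows "max_diversity X = Sup {magnitude Y | Y. closed Y \<and> Y \<subseteq> X \<and> positively_weighted Y}
         \<and> (\<forall>\<mu>. diversity_maximizing X \<mu> \<longrightarrow>
           closed (support \<mu>) \<and> support \<mu> \<subseteq> X \<and> positively_weighted (support \<mu>)
           \<and> magnitude (support \<mu>) = max_diversity X)"
  using max_diversity_le_Sup_magnitude[OF assms]
    Sup_magnitude_le_max_diversity[OF compact_imp_closed[OF assms(1)]]
    support_of_diversity_maximizing[OF assms]
  by (auto intro: antisym)

end
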